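(* Let $k\ge 1$ be an integer, let $(x_{i+1/2})_{i\in\mathbb{Z}}$ be an arbitrary mesh and let $(\bar v_i)_{i\in\mathbb{Z}}$ be an arbitrary real sequence. Let $v^\pm_{i+1/2}$ be the cell interface values of the $k$th order ENO reconstruction of $(\bar v_i)$. Then for every $i\in\mathbb{Z}$: if $\bar v_{i+1}-\bar v_i>0$ then $v^+_{i+1/2}-v^-_{i+1/2}\ge 0$; if $\bar v_{i+1}-\bar v_i<0$ then $v^+_{i+1/2}-v^-_{i+1/2}\le 0$; and if $\bar v_{i+1}-\bar v_i=0$ then $v^+_{i+1/2}-v^-_{i+1/2}=0$.
   Context: Mesh: a strictly increasing sequence $(x_{i+1/2})_{i\in\mathbb{Z}}$ of reals with $x_{i+1/2}\to\pm\infty$ as $i\to\pm\infty$; cells $I_i=[x_{i-1/2},x_{i+1/2})$ with lengths $\Delta x_i=x_{i+1/2}-x_{i-1/2}$. Given a real sequence $(\bar v_i)_{i\in\mathbb{Z}}$ (interpreted as cell averages), the divided differences are defined by $[\bar v_i]=\bar v_i$ and, for $i<j$, $[\bar v_i,\dots,\bar v_j]=\frac{[\bar v_{i+1},\dots,\bar v_j]-[\bar v_i,\dots,\bar v_{j-1}]}{x_{j+1/2}-x_{i-1/2}}$. The $k$th order ENO reconstruction: for each $i$, set $s_i^1=i$, and for $\ell=1,\dots,k-1$ set $s_i^{\ell+1}=s_i^\ell-1$ if $\bigl|[\bar v_{s_i^\ell-1},\dots,\bar v_{s_i^\ell+\ell-1}]\bigr|<\bigl|[\bar v_{s_i^\ell},\dots,\bar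 v_{s_i^\ell+\ell}]\bigr|$, and $s_i^{\ell+1}=s_i^\ell$ otherwise; put $s_i=s_i^k\in\{i-k+1,\dots,i\}$. Then $p_i$ is the unique polynomial of degree at most $k-1$ with $\frac{1}{\Delta x_j}\int_{I_j}p_i(x)\,dx=\bar v_j$ for $j=s_i,\dots,s_i+k-1$. The cell interface values are $v^-_{i+1/2}=p_i(x_{i+1/2})$ and $v^+_{i+1/2}=p_{i+1}(x_{i+1/2})$. *)

theory Defs
  imports "HOL-Analysis.Analysis" "HOL-Computational_Algebra.Polynomial"
begin

text \<open>Mesh: xh i stands for x_{i+1/2}; so cell I_i = [xh (i-1), xh i).
  Cell averages: v i stands for bar v_i.\<close>

fun dd :: "(int \<Rightarrow> real) \<Rightarrow> (int \<Rightarrow> real) \<Rightarrow> int \<Rightarrow> nat \<Rightarrow> real" where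
  "dd xh v i 0 = v i"
| "dd xh v i (Suc m) =
     (dd xh v (i + 1) m - dd xh v i m) / (xh (i + int m + 1) - xh (i - 1))"

text \<open>eno_stencil xh v i l is s_i^{l+1}.\<close>
fun eno_stencil :: "(int \<Rightarrow> real) \<Rightarrow> (int \<Rightarrow> real) \<Rightarrow> int \<Rightarrow> nat \<Rightarrow> int" where
  "eno_stencil xh v i 0 = i"
| "eno_stencil xh v i (Suc l) =
     (let s = eno_stencil xh v i l in
      if \<bar>dd xh v (s - 1) (Suc l)\<bar> < \<bar>dd xh v s (Suc l)\<bar> then s - 1 else s)"

definition eno_poly :: "nat \<Rightarrow> (int \<Rightarrow> real) \<Rightarrow> (int \<Rightarrow> real) \<Rightarrow> int \<Rightarrow> real poly" where
  "eno_poly k xh v i =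
     (let s = eno_stencil xh v i (k - 1) in
      THE p. degree p \<le> k - 1 \<and>
        (\<forall>j \<in> {s .. s + int k - 1}.
           integral {xh (j - 1) .. xh j} (poly p) / (xh j - xh (j - 1)) = v j))"

definition eno_vminus :: "nat \<Rightarrow> (int \<Rightarrow> real) \<Rightarrow> (int \<Rightarrow> real) \<Rightarrow> int \<Rightarrow> real" where
  "eno_vminus k xh v i = poly (eno_poly k xh v i) (xh i)"

definition eno_vplus :: "nat \<Rightarrow> (int \<Rightarrow> real) \<Rightarrow> (int \<Rightarrow> real) \<Rightarrow> int \<Rightarrow> real" where
  "eno_vplus k xh v i = poly (eno_poly k xh v (i + 1)) (xh i)"

end

theory Submission
  imports Defs
begin

text \<open>
  Let \<open>V\<close> be the primitive of the step function with the given cell averages. The reconstruction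
  from the stencil of cells \<open>s, \<dots>, s + k - 1\<close> is the derivative of the polynomial interpolating
  \<open>V\<close> at the \<open>k + 1\<close> interfaces of the stencil. Shifting a stencil one cell to the right changes
  this interpolant by a positive multiple of a divided difference times the node polynomial of the
  \<open>k\<close> shared interfaces, whose derivative at x_{i+1/2} has sign \<open>(-1)\<close> to the number of those
  interfaces to the right of it. Hence the jump \<open>v\<^sup>+ - v\<^sup>-\<close> at x_{i+1/2} telescopes over the
  stencils between \<open>s\<^sub>i\<close> and \<open>s\<^sub>i\<^sub>+\<^sub>1\<close> into signed divided differences. Induction on the order
  shows that the ENO choice keeps the stencils of \<open>i\<close> and \<open>i + 1\<close> ordered and all these signed
  divided differences nonnegative multiples of \<open>v\<^sub>i\<^sub>+\<^sub>1 - v\<^sub>i\<close>: each is a sum of two neighbouring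
  ones of lower order, and when one of the two lies outside the range controlled by the induction
  hypothesis, the ENO comparison makes it the smaller one in absolute value.
\<close>

definition poly_antideriv :: "'a::field_char_0 poly \<Rightarrow> 'a poly" where
  "poly_antideriv p = (\<Sum>n\<le>degree p. monom (coeff p n / of_nat (Suc n)) (Suc n))"

lemma pderiv_poly_antideriv: "pderiv (poly_antideriv p) = p"
proof -
  have "pderiv (poly_antideriv p) = (\<Sum>n\<le>degree p. monom (coeff p n) n)"
    unfolding poly_antideriv_def higher_pderiv_sum[of 1, simplified] pderiv_monom
    by (intro sum.cong) (auto simp del: of_nat_Suc)
  then show ?thesis
    by (simp add: poly_as_sum_of_monoms)
qed

lemma degree_poly_antideriv: "degree (poly_antideriv p) \<le> degree p + 1"
  unfolding poly_antideriv_def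
  by (rule degree_sum_le) (auto intro: order.trans[OF degree_monom_le])

lemma poly_eq_0_if_card_roots_gt_degree:
  fixes p :: "'a::idom poly"
  assumes "finite S" "degree p < card S" "\<And>x. x \<in> S \<Longrightarrow> poly p x = 0"
  shows "p = 0"
proof (rule ccontr)
  assume "p \<noteq> 0"
  then have "card S \<le> card {x. poly p x = 0}"
    using assms by (intro card_mono poly_roots_finite) auto
  also have "\<dots> \<le> degree p"
    using card_poly_roots_bound[OF \<open>p \<noteq> 0\<close>] .
  finally show False
    using assms(2) by simp
qed

lemma integral_poly_pderiv:
  fixes a b :: real
  assumes "a \<le> b"
  shows "integral {a..b} (poly (pderiv p)) = poly p b - poly p a"
proof -
  have "(poly (pderiv p) has_integral (poly p b - poly p a)) {a..b}"
    by (intro fundamental_theorem_of_calculus assms)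
      (metis DERIV_subset has_real_derivative_iff_has_vector_derivative poly_DERIV top_greatest)
  then show ?thesis
    by (rule integral_unique)
qed

lemma eq_if_steps_eq:
  fixes f :: "int \<Rightarrow> 'a"
  assumes "\<And>j. a < j \<Longrightarrow> j \<le> b \<Longrightarrow> f j = f (j - 1)" and "a \<le> j" "j \<le> b"
  shows "f j = f a"
  using assms(2,3)
proof (induction j rule: int_ge_induct)
  case (step j)
  then show ?case
    using assms(1)[of "j + 1"] by simp
qed simp


section \<open>Interpolation at the cell interfaces\<close>

fun neville :: "(int \<Rightarrow> real) \<Rightarrow> (int \<Rightarrow> real) \<Rightarrow> int \<Rightarrow> nat \<Rightarrow> real poly" where
  "neville xh V b 0 = [:V b:]"
| "neville xh V b (Suc m) = smult (1 / (xh (b + int m + 1) - xh b))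
     ([:- xh b, 1:] * neville xh V (b + 1) m - [:- xh (b + int m + 1), 1:] * neville xh V b m)"

lemma degree_neville: "degree (neville xh V b m) \<le> m"
proof (induction m arbitrary: b)
  case (Suc m)
  have "degree ([:- xh b, 1:] * neville xh V (b + 1) m) \<le> Suc m"
    using degree_mult_le[of "[:- xh b, 1:]" "neville xh V (b + 1) m"] Suc[of "b + 1"] by simp
  moreover have "degree ([:- xh (b + int m + 1), 1:] * neville xh V b m) \<le> Suc m"
    using degree_mult_le[of "[:- xh (b + int m + 1), 1:]" "neville xh V b m"] Suc[of b] by simp
  ultimately show ?case
    by (simp add: degree_diff_le order.trans[OF degree_smult_le])
qed simp

lemma poly_neville_node:
  assumes "strict_mono xh" "b \<le> j" "j \<le> b + int m"
  shows "poly (neville xh V b m) (xh j) = V j"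
  using assms(2,3)
proof (induction m arbitrary: b)
  case (Suc m)
  have "xh b < xh (b + int m + 1)"
    using strict_monoD[OF assms(1)] by simp
  then have nonzero: "xh (b + int m + 1) - xh b \<noteq> 0"
    by simp
  consider "j = b" | "j = b + int m + 1" | "b + 1 \<le> j \<and> j \<le> b + int m"
    using Suc.prems by linarith
  then show ?case
    by cases (use Suc.IH[of b] Suc.IH[of "b + 1"] nonzero in \<open>auto simp: field_simps\<close>)
qed simp

lemma coeff_linear_mult_top:
  fixes p :: "'a::comm_ring_1 poly"
  assumes "degree p \<le> n"
  shows "coeff ([:c, 1:] * p) (Suc n) = coeff p n"
  using assms by (simp add: coeff_eq_0)

text \<open>The leading coefficient of an interpolant is the divided difference of the data; for a
  primitive \<open>V\<close> of \<open>v\<close> these are the divided differences of \<open>v\<close> of one order less.\<close>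

lemma lead_coeff_neville:
  assumes "strict_mono xh" and V: "\<And>j. V j - V (j - 1) = (xh j - xh (j - 1)) * v j"
  shows "coeff (neville xh V b (Suc m)) (Suc m) = dd xh v (b + 1) m"
proof (induction m arbitrary: b)
  case 0
  have "xh b < xh (b + 1)"
    using strict_monoD[OF assms(1)] by simp
  then show ?case
    using V[of "b + 1"] by (simp add: field_simps)
next
  case (Suc m)
  have "coeff ([:- xh b, 1:] * neville xh V (b + 1) (Suc m)) (Suc (Suc m)) = dd xh v (b + 1 + 1) m"
    using coeff_linear_mult_top[OF degree_neville, of "- xh b" xh V "b + 1" "Suc m"] Suc.IH[of "b + 1"]
    by (simp del: neville.simps)
  moreover have "coeff ([:- xh (b + int (Suc m) + 1), 1:] * neville xh V b (Suc m)) (Suc (Suc m))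
      = dd xh v (b + 1) m"
    using coeff_linear_mult_top[OF degree_neville, of "- xh (b + int (Suc m) + 1)" xh V b "Suc m"]
      Suc.IH[of b]
    by (simp del: neville.simps)
  moreover have "xh (b + 1 + int m + 1) = xh (b + int (Suc m) + 1)"
    by (simp add: add.assoc)
  ultimately show ?case
    unfolding neville.simps(2)[of xh V b "Suc m"] coeff_smult coeff_diff by simp
qed

definition node_poly :: "(int \<Rightarrow> real) \<Rightarrow> int set \<Rightarrow> real poly" where
  "node_poly xh J = (\<Prod>j\<in>J. [:- xh j, 1:])"

lemma degree_node_poly: "finite J \<Longrightarrow> degree (node_poly xh J) = card J"
  unfolding node_poly_def by (subst degree_prod_eq_sum_degree) auto

lemma lead_coeff_node_poly: "finite J \<Longrightarrow> coeff (node_poly xh J) (card J) = 1"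
  using lead_coeff_prod[of "\<lambda>j. [:- xh j, 1:]" J] degree_node_poly[of J xh]
  unfolding node_poly_def by simp

lemma poly_node_poly_node: "finite J \<Longrightarrow> j \<in> J \<Longrightarrow> poly (node_poly xh J) (xh j) = 0"
  unfolding node_poly_def poly_prod by (rule prod_zero) auto

lemma poly_pderiv_node_poly_node:
  assumes "finite J" "i \<in> J"
  shows "poly (pderiv (node_poly xh J)) (xh i) = (\<Prod>j\<in>J - {i}. xh i - xh j)"
proof -
  have "node_poly xh J = [:- xh i, 1:] * node_poly xh (J - {i})"
    unfolding node_poly_def using assms by (simp add: prod.remove)
  then have "poly (pderiv (node_poly xh J)) (xh i)
      = poly [:- xh i, 1:] (xh i) * poly (pderiv (node_poly xh (J - {i}))) (xh i)
        + poly (node_poly xh (J - {i})) (xh i) * poly (pderiv [:- xh i, 1:]) (xh i)"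
    by (simp only: pderiv_mult poly_add poly_mult)
  then show ?thesis
    unfolding node_poly_def poly_prod by (simp add: pderiv_pCons)
qed

lemma sign_poly_pderiv_node_poly_node:
  assumes "strict_mono xh" "b \<le> i" "i \<le> b + int l"
  shows "(-1) powi (b + int l - i) * poly (pderiv (node_poly xh {b..b + int l})) (xh i) > 0"
proof -
  have split: "{b..b + int l} - {i} = {b..<i} \<union> {i<..b + int l}"
    using assms(2,3) by auto
  have "(\<Prod>j\<in>{i<..b + int l}. xh i - xh j) = (-1) ^ nat (b + int l - i) * (\<Prod>j\<in>{i<..b + int l}. xh j - xh i)"
    using prod_uminus[of "\<lambda>j. xh j - xh i" "{i<..b + int l}"] by simp
  also have "(-1) ^ nat (b + int l - i) = ((-1::real) powi (b + int l - i))"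
    using assms(3) by (simp add: power_int_def)
  finally have right: "(-1) powi (b + int l - i) * (\<Prod>j\<in>{i<..b + int l}. xh i - xh j)
      = (\<Prod>j\<in>{i<..b + int l}. xh j - xh i)"
    by simp
  have "poly (pderiv (node_poly xh {b..b + int l})) (xh i) = (\<Prod>j\<in>{b..b + int l} - {i}. xh i - xh j)"
    using assms(2,3) by (simp add: poly_pderiv_node_poly_node)
  also have "\<dots> = (\<Prod>j\<in>{b..<i}. xh i - xh j) * (\<Prod>j\<in>{i<..b + int l}. xh i - xh j)"
    unfolding split by (rule prod.union_disjoint) auto
  finally have "(-1) powi (b + int l - i) * poly (pderiv (node_poly xh {b..b + int l})) (xh i)
      = (\<Prod>j\<in>{b..<i}. xh i - xh j) * (\<Prod>j\<in>{i<..b + int l}. xh j - xh i)"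
    by (simp flip: right)
  moreover have "(\<Prod>j\<in>{b..<i}. xh i - xh j) > 0" "(\<Prod>j\<in>{i<..b + int l}. xh j - xh i) > 0"
    using strict_monoD[OF assms(1)] by (auto intro!: prod_pos)
  ultimately show ?thesis
    by simp
qed

lemma neville_shift_diff:
  assumes "strict_mono xh" and V: "\<And>j. V j - V (j - 1) = (xh j - xh (j - 1)) * v j"
  shows "neville xh V b (Suc l) - neville xh V (b - 1) (Suc l)
    = smult ((xh (b + int l + 1) - xh (b - 1)) * dd xh v b (Suc l)) (node_poly xh {b..b + int l})"
    (is "?N = smult ?C ?\<omega>")
proof -
  define Q where "Q = ?N - smult ?C ?\<omega>"
  have "xh (b - 1) < xh (b + int l + 1)"
    using strict_monoD[OF assms(1)] by simp
  moreover have "coeff ?N (Suc l) = dd xh v (b + 1) l - dd xh v b l"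
    using lead_coeff_neville[where V = V and v = v, OF assms(1) V, of b l]
      lead_coeff_neville[where V = V and v = v, OF assms(1) V, of "b - 1" l]
    by (simp del: neville.simps)
  ultimately have "coeff ?N (Suc l) = ?C"
    by simp
  moreover have "card {b..b + int l} = Suc l"
    by simp
  ultimately have top: "coeff Q (Suc l) = 0"
    unfolding Q_def using lead_coeff_node_poly[of "{b..b + int l}" xh] by (simp del: neville.simps)
  have "degree Q \<le> Suc l"
    unfolding Q_def using degree_node_poly[of "{b..b + int l}" xh]
    by (intro degree_diff_le degree_neville order.trans[OF degree_smult_le]) simp_all
  then have "degree Q \<le> l"
    using top by (intro degree_le allI impI) (metis Suc_lessI coeff_eq_0 le_less_trans)
  moreover have "card (xh ` {b..b + int l}) = Suc l"
    using card_image[of xh "{b..b + int l}"] strict_mono_imp_inj_on[OF assms(1)] by simp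
  moreover have "poly Q (xh j) = 0" if "b \<le> j" "j \<le> b + int l" for j
    unfolding Q_def using that poly_node_poly_node[of "{b..b + int l}" j xh]
      poly_neville_node[OF assms(1), of b j "Suc l" V] poly_neville_node[OF assms(1), of "b - 1" j "Suc l" V]
    by (simp del: neville.simps)
  ultimately have "Q = 0"
    by (intro poly_eq_0_if_card_roots_gt_degree[of "xh ` {b..b + int l}"]) auto
  then show ?thesis
    unfolding Q_def by simp
qed


section \<open>The ENO polynomial as the derivative of an interpolant\<close>

text \<open>\<open>primitive xh v j\<close> is the value at x_{j+1/2} of the primitive, vanishing at x_{1/2}, of the
  step function with cell averages \<open>v\<close>.\<close>

definition primitive :: "(int \<Rightarrow> real) \<Rightarrow> (int \<Rightarrow> real) \<Rightarrow> int \<Rightarrow> real" where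
  "primitive xh v j =
     (\<Sum>l\<in>{0<..j}. (xh l - xh (l - 1)) * v l) - (\<Sum>l\<in>{j<..0}. (xh l - xh (l - 1)) * v l)"

lemma primitive_diff: "primitive xh v j - primitive xh v (j - 1) = (xh j - xh (j - 1)) * v j"
proof (cases "j \<ge> 1")
  case True
  then have "{0<..j} = insert j {0<..j - 1}" "{j<..0} = {}" "{j - 1<..0} = {}"
    by auto
  then show ?thesis
    unfolding primitive_def by simp
next
  case False
  then have "{j - 1<..0} = insert j {j<..0}" "{0<..j} = {}" "{0<..j - 1} = {}"
    by auto
  then show ?thesis
    unfolding primitive_def by simp
qed

definition stencil_poly :: "(int \<Rightarrow> real) \<Rightarrow> (int \<Rightarrow> real) \<Rightarrow> int \<Rightarrow> nat \<Rightarrow> real poly" where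
  "stencil_poly xh v s k = pderiv (neville xh (primitive xh v) (s - 1) k)"

lemma degree_stencil_poly: "degree (stencil_poly xh v s k) \<le> k - 1"
  unfolding stencil_poly_def
  using degree_neville[of xh "primitive xh v" "s - 1" k] by (simp add: degree_pderiv)

lemma cell_average_stencil_poly:
  assumes "strict_mono xh" "s \<le> j" "j \<le> s + int k - 1"
  shows "integral {xh (j - 1)..xh j} (poly (stencil_poly xh v s k)) / (xh j - xh (j - 1)) = v j"
proof -
  have "xh (j - 1) < xh j"
    using strict_monoD[OF assms(1), of "j - 1" j] by simp
  then have "integral {xh (j - 1)..xh j} (poly (stencil_poly xh v s k))
      = poly (neville xh (primitive xh v) (s - 1) k) (xh j)
        - poly (neville xh (primitive xh v) (s - 1) k) (xh (j - 1))"
    unfolding stencil_poly_def by (intro integral_poly_pderiv) simp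
  also have "\<dots> = (xh j - xh (j - 1)) * v j"
    using assms by (simp add: poly_neville_node primitive_diff)
  finally show ?thesis
    using \<open>xh (j - 1) < xh j\<close> by simp
qed

lemma pderiv_eq_0_if_eq_at_nodes:
  fixes G :: "real poly"
  assumes "strict_mono xh" "degree G \<le> k"
    and steps: "\<And>j. a < j \<Longrightarrow> j \<le> a + int k \<Longrightarrow> poly G (xh j) = poly G (xh (j - 1))"
  shows "pderiv G = 0"
proof -
  define H where "H = G - [:poly G (xh a):]"
  have "H = 0"
  proof (rule poly_eq_0_if_card_roots_gt_degree)
    have "degree H \<le> k"
      unfolding H_def using assms(2) by (intro degree_diff_le) simp_all
    moreover have "card (xh ` {a..a + int k}) = Suc k"
      using card_image[of xh "{a..a + int k}"] strict_mono_imp_inj_on[OF assms(1)] by simp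
    ultimately show "degree H < card (xh ` {a..a + int k})"
      by simp
    show "poly H x = 0" if node: "x \<in> xh ` {a..a + int k}" for x
    proof -
      obtain j where "a \<le> j" "j \<le> a + int k" "x = xh j"
        using node by auto
      then show ?thesis
        using eq_if_steps_eq[where f = "\<lambda>j. poly G (xh j)" and b = "a + int k" and j = j, OF steps]
        unfolding H_def by simp
    qed
  qed simp
  then have "G = [:poly G (xh a):]"
    unfolding H_def by simp
  then show ?thesis
    by (metis pCons_0_0 pderiv_0 pderiv_pCons)
qed

text \<open>Cell averages on \<open>k\<close> consecutive cells determine a polynomial of degree below \<open>k\<close>: the
  difference of the antiderivatives takes equal values at the \<open>k + 1\<close> interfaces.\<close>

lemma poly_eq_if_cell_averages_eq:
  fixes p q :: "real poly"
  assumes "strict_mono xh" "k \<ge> 1" "degree p \<le> k - 1" "degree q \<le> k - 1"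
    and cells: "\<And>j. s \<le> j \<Longrightarrow> j \<le> s + int k - 1 \<Longrightarrow>
      integral {xh (j - 1)..xh j} (poly p) / (xh j - xh (j - 1))
      = integral {xh (j - 1)..xh j} (poly q) / (xh j - xh (j - 1))"
  shows "p = q"
proof -
  define G where "G = poly_antideriv p - poly_antideriv q"
  have "pderiv G = 0"
  proof (rule pderiv_eq_0_if_eq_at_nodes[OF assms(1), where a = "s - 1"])
    show "degree G \<le> k"
      unfolding G_def using degree_poly_antideriv[of p] degree_poly_antideriv[of q] assms(2-4)
      by (intro degree_diff_le) linarith+
    fix j
    assume "s - 1 < j" "j \<le> s - 1 + int k"
    moreover have "xh (j - 1) < xh j"
      using strict_monoD[OF assms(1), of "j - 1" j] by simp
    ultimately have "integral {xh (j - 1)..xh j} (poly p) = integral {xh (j - 1)..xh j} (poly q)"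
      using cells[of j] by simp
    moreover note FTC = integral_poly_pderiv[OF less_imp_le[OF \<open>xh (j - 1) < xh j\<close>]]
    ultimately show "poly G (xh j) = poly G (xh (j - 1))"
      using FTC[of "poly_antideriv p"] FTC[of "poly_antideriv q"]
      unfolding G_def poly_diff pderiv_poly_antideriv by linarith
  qed
  then show ?thesis
    unfolding G_def by (simp add: pderiv_diff pderiv_poly_antideriv)
qed

lemma eno_poly_eq_stencil_poly:
  assumes "strict_mono xh" "k \<ge> 1"
  shows "eno_poly k xh v i = stencil_poly xh v (eno_stencil xh v i (k - 1)) k"
  unfolding eno_poly_def Let_def
proof (rule the_equality)
  let ?s = "eno_stencil xh v i (k - 1)"
  show "degree (stencil_poly xh v ?s k) \<le> k - 1 \<and>
    (\<forall>j \<in> {?s .. ?s + int k - 1}.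
       integral {xh (j - 1) .. xh j} (poly (stencil_poly xh v ?s k)) / (xh j - xh (j - 1)) = v j)"
    using degree_stencil_poly cell_average_stencil_poly[OF assms(1)] by simp
  fix q
  assume "degree q \<le> k - 1 \<and>
    (\<forall>j \<in> {?s .. ?s + int k - 1}. integral {xh (j - 1) .. xh j} (poly q) / (xh j - xh (j - 1)) = v j)"
  then show "q = stencil_poly xh v ?s k"
    using cell_average_stencil_poly[OF assms(1)]
    by (intro poly_eq_if_cell_averages_eq[where s = ?s, OF assms(1,2) _ degree_stencil_poly]) simp_all
qed


section \<open>Signs of the ENO jumps\<close>

definition nonneg_multiple :: "real \<Rightarrow> real \<Rightarrow> bool" where
  "nonneg_multiple x D \<longleftrightarrow> (\<exists>c\<ge>0. x = c * D)"

lemma nonneg_multiple_add: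
  "nonneg_multiple x D \<Longrightarrow> nonneg_multiple y D \<Longrightarrow> nonneg_multiple (x + y) D"
  unfolding nonneg_multiple_def by (metis add_nonneg_nonneg distrib_right)

lemma nonneg_multiple_scale:
  "nonneg_multiple x D \<Longrightarrow> c \<ge> 0 \<Longrightarrow> nonneg_multiple (c * x) D"
  unfolding nonneg_multiple_def by (metis mult.assoc mult_nonneg_nonneg)

lemma nonneg_multiple_add_dominated:
  assumes "nonneg_multiple x D" "\<bar>y\<bar> \<le> \<bar>x\<bar>"
  shows "nonneg_multiple (x + y) D"
proof -
  obtain c where c: "c \<ge> 0" "x = c * D"
    using assms(1) unfolding nonneg_multiple_def by blast
  show ?thesis
  proof (cases "D = 0")
    case True
    with assms(2) c have "x + y = 0 * D"
      by simp
    then show ?thesis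
      unfolding nonneg_multiple_def by (intro exI[of _ 0]) simp
  next
    case False
    have "\<bar>y\<bar> \<le> c * \<bar>D\<bar>"
      using assms(2) c by (simp add: abs_mult)
    then have "\<bar>y / D\<bar> \<le> c"
      using False by (simp add: divide_le_eq)
    then have "c + y / D \<ge> 0"
      by linarith
    moreover have "x + y = (c + y / D) * D"
      using c(2) False by (simp add: field_simps)
    ultimately show ?thesis
      unfolding nonneg_multiple_def by (intro exI[of _ "c + y / D"]) simp
  qed
qed

lemma nonneg_multiple_telescope:
  fixes f :: "int \<Rightarrow> real"
  assumes "a \<le> c" and steps: "\<And>b. a \<le> b \<Longrightarrow> b < c \<Longrightarrow> nonneg_multiple (f (b + 1) - f b) D"
  shows "nonneg_multiple (f c - f a) D"
  using assms(1) steps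
proof (induction c rule: int_ge_induct)
  case (step c)
  then have "nonneg_multiple ((f (c + 1) - f c) + (f c - f a)) D"
    by (intro nonneg_multiple_add) auto
  then show ?case
    by simp
qed (auto simp: nonneg_multiple_def)

lemma nonneg_multiple_signs:
  assumes "nonneg_multiple x D"
  shows "(D > 0 \<longrightarrow> x \<ge> 0) \<and> (D < 0 \<longrightarrow> x \<le> 0) \<and> (D = 0 \<longrightarrow> x = 0)"
  using assms unfolding nonneg_multiple_def by (auto simp: mult_nonneg_nonpos)

lemma nonneg_multiple_after_eno_selection:
  fixes X :: "int \<Rightarrow> real"
  defines "sel s \<equiv> if \<bar>X (s - 1)\<bar> < \<bar>X s\<bar> then s - 1 else s"
  assumes "a \<le> c" and X: "\<And>b. a \<le> b \<Longrightarrow> b < c \<Longrightarrow> nonneg_multiple (X b) D"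
  shows "sel a \<le> sel c \<and> (\<forall>b. sel a \<le> b \<and> b < sel c \<longrightarrow> nonneg_multiple (X (b + 1) + X b) D)"
proof (cases "a = c")
  case False
  with assms(2) have "a < c"
    by simp
  have "nonneg_multiple (X (b + 1) + X b) D" if b: "sel a \<le> b" "b < sel c" for b
  proof (cases "b < a")
    case True
    with b have "b = a - 1" "\<bar>X (a - 1)\<bar> < \<bar>X a\<bar>"
      unfolding sel_def by (auto split: if_splits)
    then show ?thesis
      using X[of a] \<open>a < c\<close> nonneg_multiple_add_dominated[of "X a" D "X (a - 1)"] by simp
  next
    case False
    show ?thesis
    proof (cases "b + 1 < c")
      case True
      then show ?thesis
        using X[of b] X[of "b + 1"] \<open>\<not> b < a\<close> by (simp add: nonneg_multiple_add)
    next
      case False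
      with b have "b = c - 1" "\<bar>X c\<bar> \<le> \<bar>X (c - 1)\<bar>"
        unfolding sel_def by (auto split: if_splits)
      then show ?thesis
        using X[of "c - 1"] \<open>a < c\<close> nonneg_multiple_add_dominated[of "X (c - 1)" D "X c"]
        by (simp add: add.commute)
    qed
  qed
  moreover have "sel a \<le> sel c"
    using \<open>a < c\<close> unfolding sel_def by auto
  ultimately show ?thesis
    by blast
qed auto

lemma dd_Suc_Suc_signed:
  "(-1) powi (b + int (Suc n) - i) * dd xh v b (Suc (Suc n))
    = ((-1) powi (b + 1 + int n - i) * dd xh v (b + 1) (Suc n)
       + (-1) powi (b + int n - i) * dd xh v b (Suc n))
      / (xh (b + int (Suc n) + 1) - xh (b - 1))"
proof -
  have "(-1::real) powi (b + int (Suc n) - i) = - ((-1) powi (b + int n - i))"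
    using power_int_add_1[of "-1::real" "b + int n - i"] by (simp add: algebra_simps)
  moreover have "b + 1 + int n - i = b + int (Suc n) - i"
    by simp
  ultimately show ?thesis
    unfolding dd.simps(2)[of xh v b "Suc n"] by (simp add: algebra_simps diff_divide_distrib del: dd.simps)
qed

lemma eno_stencil_bounds: "i - int n \<le> eno_stencil xh v i n \<and> eno_stencil xh v i n \<le> i"
  by (induction n) (auto simp: Let_def)

lemma eno_stencils_ordered_and_signed:
  assumes "strict_mono xh"
  shows "eno_stencil xh v i n \<le> eno_stencil xh v (i + 1) n \<and>
    (\<forall>b. eno_stencil xh v i n \<le> b \<and> b < eno_stencil xh v (i + 1) n \<longrightarrow>
       nonneg_multiple ((-1) powi (b + int n - i) * dd xh v b (Suc n)) (v (i + 1) - v i))"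
proof (induction n)
  case 0
  have "xh (i - 1) < xh (i + 1)"
    using strict_monoD[OF assms] by simp
  then have "nonneg_multiple (dd xh v i 1) (v (i + 1) - v i)"
    unfolding nonneg_multiple_def by (intro exI[of _ "1 / (xh (i + 1) - xh (i - 1))"]) simp
  then show ?case
    by auto
next
  case (Suc n)
  define X where "X b = (-1) powi (b + int n - i) * dd xh v b (Suc n)" for b
  have sel: "eno_stencil xh v j (Suc n)
      = (let s = eno_stencil xh v j n in if \<bar>X (s - 1)\<bar> < \<bar>X s\<bar> then s - 1 else s)" for j
    by (simp add: X_def abs_mult power_int_abs Let_def del: dd.simps)
  have "nonneg_multiple ((-1) powi (b + int (Suc n) - i) * dd xh v b (Suc (Suc n))) (v (i + 1) - v i)"
    if "nonneg_multiple (X (b + 1) + X b) (v (i + 1) - v i)" for b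
  proof -
    have "xh (b - 1) < xh (b + int (Suc n) + 1)"
      using strict_monoD[OF assms] by simp
    then show ?thesis
      unfolding dd_Suc_Suc_signed divide_inverse mult.commute[of _ "inverse _"]
      using that by (intro nonneg_multiple_scale) (simp_all add: X_def)
  qed
  then show ?case
    using nonneg_multiple_after_eno_selection[of "eno_stencil xh v i n" "eno_stencil xh v (i + 1) n" X]
      Suc.IH
    unfolding sel Let_def X_def by blast
qed

lemma poly_stencil_poly_shift_signed:
  assumes "strict_mono xh" "b \<le> i" "i \<le> b + int l"
    and "nonneg_multiple ((-1) powi (b + int l - i) * dd xh v b (Suc l)) D"
  shows "nonneg_multiple
    (poly (stencil_poly xh v (b + 1) (Suc l)) (xh i) - poly (stencil_poly xh v b (Suc l)) (xh i)) D"
proof -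
  define \<sigma> where "\<sigma> = (-1::real) powi (b + int l - i)"
  define \<omega> where "\<omega> = poly (pderiv (node_poly xh {b..b + int l})) (xh i)"
  have "xh (b - 1) < xh (b + int l + 1)"
    using strict_monoD[OF assms(1)] by simp
  moreover have "\<sigma> * \<omega> > 0"
    unfolding \<sigma>_def \<omega>_def using sign_poly_pderiv_node_poly_node[OF assms(1-3)] .
  ultimately have pos: "(xh (b + int l + 1) - xh (b - 1)) * (\<sigma> * \<omega>) \<ge> 0"
    by simp
  have "poly (stencil_poly xh v (b + 1) (Suc l)) (xh i) - poly (stencil_poly xh v b (Suc l)) (xh i)
      = poly (pderiv (neville xh (primitive xh v) b (Suc l)
                      - neville xh (primitive xh v) (b - 1) (Suc l))) (xh i)"
    unfolding stencil_poly_def by (simp add: pderiv_diff del: neville.simps)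
  also have "\<dots> = (xh (b + int l + 1) - xh (b - 1)) * dd xh v b (Suc l) * \<omega>"
    unfolding neville_shift_diff[where V = "primitive xh v" and v = v, OF assms(1) primitive_diff]
      \<omega>_def by (simp add: pderiv_smult)
  also have "\<dots> = ((xh (b + int l + 1) - xh (b - 1)) * (\<sigma> * \<omega>)) * (\<sigma> * dd xh v b (Suc l))"
    unfolding \<sigma>_def by (simp add: algebra_simps del: dd.simps)
  finally show ?thesis
    using nonneg_multiple_scale[OF assms(4) pos] unfolding \<sigma>_def by simp
qed

lemma eno_jump_nonneg_multiple:
  assumes "strict_mono xh" "k \<ge> 1"
  shows "nonneg_multiple (eno_vplus k xh v i - eno_vminus k xh v i) (v (i + 1) - v i)"
proof -
  obtain l where l: "k = Suc l"
    using assms(2) by (cases k) auto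
  define a where "a = eno_stencil xh v i l"
  define c where "c = eno_stencil xh v (i + 1) l"
  define F where "F b = poly (stencil_poly xh v b k) (xh i)" for b
  have "eno_vplus k xh v i - eno_vminus k xh v i = F c - F a"
    unfolding eno_vplus_def eno_vminus_def F_def a_def c_def
    using eno_poly_eq_stencil_poly[OF assms, of v] l by simp
  moreover have "nonneg_multiple (F c - F a) (v (i + 1) - v i)"
  proof (rule nonneg_multiple_telescope)
    show "a \<le> c"
      using eno_stencils_ordered_and_signed[OF assms(1)] unfolding a_def c_def by blast
    fix b
    assume "a \<le> b" "b < c"
    moreover have "i - int l \<le> a" "c \<le> i + 1"
      unfolding a_def c_def by (simp_all add: eno_stencil_bounds)
    ultimately show "nonneg_multiple (F (b + 1) - F b) (v (i + 1) - v i)"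
      unfolding F_def l
      using eno_stencils_ordered_and_signed[OF assms(1), of v i l]
      by (intro poly_stencil_poly_shift_signed[OF assms(1)]) (auto simp: a_def c_def)
  qed
  ultimately show ?thesis
    by simp
qed

theorem mainTheorem1:
  fixes k :: nat and xh :: "int \<Rightarrow> real" and v :: "int \<Rightarrow> real" and i :: int
  assumes "k \<ge> 1"
    and "strict_mono xh"
    and "filterlim xh at_top at_top"
    and "filterlim xh at_bot at_bot"
  shows "(v (i + 1) - v i > 0 \<longrightarrow> eno_vplus k xh v i - eno_vminus k xh v i \<ge> 0) \<and>
         (v (i + 1) - v i < 0 \<longrightarrow> eno_vplus k xh v i - eno_vminus k xh v i \<le> 0) \<and>
         (v (i + 1) - v i = 0 \<longrightarrow> eno_vplus k xh v i - eno_vminus k xh v i = 0)"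
  using nonneg_multiple_signs[OF eno_jump_nonneg_multiple[OF assms(2,1)]] .

end
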